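(* Every RPBA-recognizable $\omega$-language is PPBA-recognizable.
   Context: A Parikh automaton of dimension $d$ is $\mathcal{A}=(Q,\Sigma,q_0,\Delta,F,C)$ with finite $Q$, $q_0\in Q$, $F\subseteq Q$, finite $\Delta\subseteq Q\times\Sigma\times\mathbb{N}^d\times Q$ and semi-linear $C\subseteq\mathbb{N}^d$ (a finite union of sets $\{b_0+\sum_{j=1}^\ell b_jz_j\mid z_j\in\mathbb{N}\}$, $b_j\in\mathbb{N}^d$). A run on an infinite word $\alpha$ is $r_1r_2\cdots$ with $r_i=(p_{i-1},\alpha_i,\mathbf{v}_i,p_i)\in\Delta$, $p_0=q_0$, and $\rho(r_1\cdots r_i)=\sum_{k\le i}\mathbf{v}_k$. For an RPBA (reachability Parikh–Büchi automaton) the run is accepting if there is $i\ge1$ with $p_i\in F$ and $\rho(r_1\cdots r_i)\in C$, and there are infinitely many $j$ with $p_j\in F$. For a PPBA (prefix Parikh–Büchi automaton) the run is accepting if there are infinitely many $i\ge1$ with $p_i\in F$ and $\rho(r_1\cdots r_i)\in C$. An $\omega$-language is X-recognizable if it equals the set of infinite words with an accepting run of some automaton of type X. *)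

theory Defs
  imports Main
begin

(* Vectors in N^d are represented as lists of naturals of length d. *)
type_synonym vec = "nat list"

definition vadd :: "vec \<Rightarrow> vec \<Rightarrow> vec" where
  "vadd u v = map2 (+) u v"

definition vsmul :: "nat \<Rightarrow> vec \<Rightarrow> vec" where
  "vsmul z v = map ((*) z) v"

definition linear_set :: "nat \<Rightarrow> vec \<Rightarrow> vec list \<Rightarrow> vec set" where
  "linear_set d b0 ps = {v. \<exists>zs::nat list. length zs = length ps \<and>
      v = foldr vadd (map2 vsmul zs ps) b0}"

definition semilinear :: "nat \<Rightarrow> vec set \<Rightarrow> bool" where
  "semilinear d C \<longleftrightarrow> (\<exists>L :: (vec \<times> vec list) set. finite L \<and>
      (\<forall>(b0, ps) \<in> L. length b0 = d \<and> (\<forall>p \<in> set ps. length p = d)) \<and>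
      C = (\<Union>(b0, ps) \<in> L. linear_set d b0 ps))"

(* Parikh automaton (Q, Sigma, q0, Delta, F, C) of dimension d; the alphabet Sigma is
   the (arbitrary) type 'a, states are natural numbers. *)
record 'a parikh_aut =
  states :: "nat set"
  init :: nat
  trans :: "(nat \<times> 'a \<times> vec \<times> nat) set"
  final :: "nat set"
  dim :: nat
  constr :: "vec set"

definition wf_pa :: "'a parikh_aut \<Rightarrow> bool" where
  "wf_pa A \<longleftrightarrow> finite (states A) \<and> init A \<in> states A \<and> final A \<subseteq> states A \<and>
     finite (trans A) \<and>
     (\<forall>(p, a, v, q) \<in> trans A. p \<in> states A \<and> q \<in> states A \<and> length v = dim A) \<and>
     semilinear (dim A) (constr A)"

(* A run on alpha: r :: nat => transition, r i is the (i+1)-th transition r_{i+1},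
   i.e. r i = (p_i, alpha_{i+1}, v_{i+1}, p_{i+1}) with 0-based word alpha :: nat => 'a. *)
definition is_run :: "'a parikh_aut \<Rightarrow> (nat \<Rightarrow> 'a) \<Rightarrow> (nat \<Rightarrow> nat \<times> 'a \<times> vec \<times> nat) \<Rightarrow> bool" where
  "is_run A w r \<longleftrightarrow> (\<forall>i. r i \<in> trans A \<and> fst (snd (r i)) = w i) \<and>
     fst (r 0) = init A \<and>
     (\<forall>i. snd (snd (snd (r i))) = fst (r (Suc i)))"

(* state p_i reached after the first i transitions (i >= 1) *)
definition rstate :: "(nat \<Rightarrow> nat \<times> 'a \<times> vec \<times> nat) \<Rightarrow> nat \<Rightarrow> nat" where
  "rstate r i = snd (snd (snd (r (i - 1))))"

definition rho :: "nat \<Rightarrow> (nat \<Rightarrow> nat \<times> 'a \<times> vec \<times> nat) \<Rightarrow> nat \<Rightarrow> vec" where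
  "rho d r i = foldr vadd (map (\<lambda>k. fst (snd (snd (r k)))) [0..<i]) (replicate d 0)"

definition rpba_accepting :: "'a parikh_aut \<Rightarrow> (nat \<Rightarrow> nat \<times> 'a \<times> vec \<times> nat) \<Rightarrow> bool" where
  "rpba_accepting A r \<longleftrightarrow>
     (\<exists>i\<ge>1. rstate r i \<in> final A \<and> rho (dim A) r i \<in> constr A) \<and>
     (\<exists>\<^sub>\<infinity>j. j \<ge> 1 \<and> rstate r j \<in> final A)"

definition ppba_accepting :: "'a parikh_aut \<Rightarrow> (nat \<Rightarrow> nat \<times> 'a \<times> vec \<times> nat) \<Rightarrow> bool" where
  "ppba_accepting A r \<longleftrightarrow>
     (\<exists>\<^sub>\<infinity>i. i \<ge> 1 \<and> rstate r i \<in> final A \<and> rho (dim A) r i \<in> constr A)"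

definition rpba_lang :: "'a parikh_aut \<Rightarrow> (nat \<Rightarrow> 'a) set" where
  "rpba_lang A = {w. \<exists>r. is_run A w r \<and> rpba_accepting A r}"

definition ppba_lang :: "'a parikh_aut \<Rightarrow> (nat \<Rightarrow> 'a) set" where
  "ppba_lang A = {w. \<exists>r. is_run A w r \<and> ppba_accepting A r}"

definition rpba_recognizable :: "'a set \<Rightarrow> (nat \<Rightarrow> 'a) set \<Rightarrow> bool" where
  "rpba_recognizable \<Sigma> L \<longleftrightarrow> (\<exists>A. wf_pa A \<and>
     (\<forall>(p, a, v, q) \<in> trans A. a \<in> \<Sigma>) \<and> L = rpba_lang A)"

definition ppba_recognizable :: "'a set \<Rightarrow> (nat \<Rightarrow> 'a) set \<Rightarrow> bool" where
  "ppba_recognizable \<Sigma> L \<longleftrightarrow> (\<exists>A. wf_pa A \<and>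
     (\<forall>(p, a, v, q) \<in> trans A. a \<in> \<Sigma>) \<and> L = ppba_lang A)"

end

theory Submission
  imports Defs
begin

(* An accepting RPBA run meets its Parikh constraint once, in a final state, and from then
   on only needs Buechi acceptance. The PPBA guesses that moment: it simulates A in a counting
   copy and, on entering a final state, may jump to a frozen copy of A whose transitions all
   carry the zero vector. In the frozen copy the Parikh value stays the one reached at the
   jump, so each later visit to a final state is an accepting prefix. Conversely, the jump
   of a PPBA-accepting run marks a position at which the projected run of A meets the
   reachability condition, since the Parikh value there equals that at any later accepting
   prefix. *)

type_synonym 'a transition = "nat \<times> 'a \<times> vec \<times> nat"

abbreviation source :: "'a transition \<Rightarrow> nat" where
  "source t \<equiv> fst t"

abbreviation label :: "'a transition \<Rightarrow> 'a" where
  "label t \<equiv> fst (snd t)"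

abbreviation weight :: "'a transition \<Rightarrow> vec" where
  "weight t \<equiv> fst (snd (snd t))"

abbreviation target :: "'a transition \<Rightarrow> nat" where
  "target t \<equiv> snd (snd (snd t))"

lemma length_vadd [simp]: "length (vadd u v) = min (length u) (length v)"
  by (simp add: vadd_def)

lemma vadd_commute: "vadd u v = vadd v u"
  unfolding vadd_def by (induction u arbitrary: v) (auto simp: zip_Cons1 split: list.splits)

lemma vadd_assoc: "vadd (vadd u v) w = vadd u (vadd v w)"
  unfolding vadd_def by (induction u arbitrary: v w) (auto simp: zip_Cons1 split: list.splits)

lemma vadd_left_commute: "vadd u (vadd v w) = vadd v (vadd u w)"
  by (metis vadd_assoc vadd_commute)

lemma vadd_replicate_zero: "length u \<le> d \<Longrightarrow> vadd u (replicate d 0) = u"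
  unfolding vadd_def
proof (induction u arbitrary: d)
  case (Cons a u)
  then show ?case by (cases d) auto
qed simp

lemma foldr_vadd_vadd: "foldr vadd us (vadd v w) = vadd v (foldr vadd us w)"
  by (induction us) (auto simp: vadd_left_commute)

lemma rho_0 [simp]: "rho d r 0 = replicate d 0"
  by (simp add: rho_def)

lemma rho_Suc: "rho d r (Suc i) = vadd (rho d r i) (weight (r i))"
proof -
  have "rho d r (Suc i) =
      foldr vadd (map (\<lambda>k. weight (r k)) [0..<i]) (vadd (weight (r i)) (replicate d 0))"
    by (simp add: rho_def)
  also have "\<dots> = vadd (weight (r i)) (rho d r i)"
    unfolding rho_def by (rule foldr_vadd_vadd)
  finally show ?thesis by (simp add: vadd_commute)
qed

lemma length_rho_le: "length (rho d r i) \<le> d"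
  by (induction i) (auto simp: rho_Suc)

lemma rho_cong:
  "(\<And>k. k < i \<Longrightarrow> weight (r k) = weight (r' k)) \<Longrightarrow> rho d r i = rho d r' i"
  unfolding rho_def by (intro arg_cong[where f = "\<lambda>us. foldr vadd us _"]) auto

lemma rho_eq_if_zero_weights:
  assumes "\<And>k. s \<le> k \<Longrightarrow> k < i \<Longrightarrow> weight (r k) = replicate d 0" and "s \<le> i"
  shows "rho d r i = rho d r s"
  using assms
proof (induction i)
  case (Suc i)
  then show ?case
    by (cases "s = Suc i") (simp_all add: rho_Suc vadd_replicate_zero length_rho_le)
qed simp

lemma rstate_Suc [simp]: "rstate r (Suc i) = target (r i)"
  by (simp add: rstate_def)

lemma rstate_run: "is_run A w r \<Longrightarrow> 1 \<le> j \<Longrightarrow> rstate r j = source (r j)"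
  by (cases j) (auto simp: is_run_def)

(* State q of A is represented by 2 q in the counting copy and by 2 q + 1 in the frozen copy. *)
definition copy_trans :: "nat \<Rightarrow> nat \<Rightarrow> vec \<Rightarrow> 'a transition \<Rightarrow> 'a transition" where
  "copy_trans b c v t = (2 * source t + b, label t, v, 2 * target t + c)"

definition copies :: "'a parikh_aut \<Rightarrow> 'a transition \<Rightarrow> 'a transition set" where
  "copies A t = {copy_trans 0 0 (weight t) t, copy_trans 1 1 (replicate (dim A) 0) t} \<union>
     (if target t \<in> final A then {copy_trans 0 1 (weight t) t} else {})"

definition ppba_of_rpba :: "'a parikh_aut \<Rightarrow> 'a parikh_aut" where
  "ppba_of_rpba A =
    \<lparr>states = (\<lambda>q. 2 * q) ` states A \<union> (\<lambda>q. 2 * q + 1) ` states A,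
     init = 2 * init A,
     trans = (\<Union>t \<in> trans A. copies A t),
     final = (\<lambda>q. 2 * q + 1) ` final A,
     dim = dim A,
     constr = constr A\<rparr>"

lemma ppba_of_rpba_simps [simp]:
  "states (ppba_of_rpba A) = (\<lambda>q. 2 * q) ` states A \<union> (\<lambda>q. 2 * q + 1) ` states A"
  "init (ppba_of_rpba A) = 2 * init A"
  "trans (ppba_of_rpba A) = (\<Union>t \<in> trans A. copies A t)"
  "final (ppba_of_rpba A) = (\<lambda>q. 2 * q + 1) ` final A"
  "dim (ppba_of_rpba A) = dim A"
  "constr (ppba_of_rpba A) = constr A"
  by (simp_all add: ppba_of_rpba_def)

lemma wf_pa_ppba_of_rpba: "wf_pa A \<Longrightarrow> wf_pa (ppba_of_rpba A)"
  unfolding wf_pa_def by (auto simp: copies_def copy_trans_def)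

lemma labels_ppba_of_rpba:
  "\<forall>(p, a, v, q) \<in> trans A. a \<in> \<Sigma> \<Longrightarrow> \<forall>(p, a, v, q) \<in> trans (ppba_of_rpba A). a \<in> \<Sigma>"
  by (auto simp: copies_def copy_trans_def)

definition switch_run :: "nat \<Rightarrow> nat \<Rightarrow> (nat \<Rightarrow> 'a transition) \<Rightarrow> nat \<Rightarrow> 'a transition" where
  "switch_run d n r k =
    (if k < n then copy_trans 0 0 (weight (r k)) (r k)
     else if k = n then copy_trans 0 1 (weight (r k)) (r k)
     else copy_trans 1 1 (replicate d 0) (r k))"

lemma is_run_switch_run:
  assumes "is_run A w r" and "target (r n) \<in> final A"
  shows "is_run (ppba_of_rpba A) w (switch_run (dim A) n r)"
  unfolding is_run_def
proof (intro conjI allI)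
  fix k
  have "r k \<in> trans A" "label (r k) = w k"
    using assms(1) by (auto simp: is_run_def)
  then show "switch_run (dim A) n r k \<in> trans (ppba_of_rpba A)"
    and "label (switch_run (dim A) n r k) = w k"
    using assms(2) by (auto simp: switch_run_def copies_def copy_trans_def)
  show "target (switch_run (dim A) n r k) = source (switch_run (dim A) n r (Suc k))"
    using assms(1) by (simp add: is_run_def switch_run_def copy_trans_def)
next
  show "source (switch_run (dim A) n r 0) = init (ppba_of_rpba A)"
    using assms(1) by (simp add: is_run_def switch_run_def copy_trans_def)
qed

lemma rho_switch_run:
  assumes "Suc n \<le> j"
  shows "rho d (switch_run d n r) j = rho d r (Suc n)"
proof -
  have "rho d (switch_run d n r) j = rho d (switch_run d n r) (Suc n)"
    using assms by (intro rho_eq_if_zero_weights) (auto simp: switch_run_def copy_trans_def)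
  also have "\<dots> = rho d r (Suc n)"
    by (rule rho_cong) (simp add: switch_run_def copy_trans_def)
  finally show ?thesis .
qed

lemma rstate_switch_run:
  "Suc n \<le> j \<Longrightarrow> rstate (switch_run d n r) j = 2 * rstate r j + 1"
  by (cases j) (auto simp: switch_run_def copy_trans_def)

lemma rpba_lang_subset_ppba_lang: "rpba_lang A \<subseteq> ppba_lang (ppba_of_rpba A)"
proof
  fix w assume "w \<in> rpba_lang A"
  then obtain r n where run: "is_run A w r"
    and reach: "rstate r (Suc n) \<in> final A" "rho (dim A) r (Suc n) \<in> constr A"
    and buchi: "\<exists>\<^sub>\<infinity>j. j \<ge> 1 \<and> rstate r j \<in> final A"
    unfolding rpba_lang_def rpba_accepting_def by (auto simp: Suc_le_eq dest: gr0_implies_Suc)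
  let ?r' = "switch_run (dim A) n r"
  have "\<forall>\<^sub>\<infinity>j. Suc n \<le> j"
    by (simp add: cofinite_eq_sequentially)
  with buchi have "\<exists>\<^sub>\<infinity>j. j \<ge> 1 \<and> rstate ?r' j \<in> final (ppba_of_rpba A)
      \<and> rho (dim (ppba_of_rpba A)) ?r' j \<in> constr (ppba_of_rpba A)"
    by (elim frequently_rev_mp eventually_mono) (simp add: rstate_switch_run rho_switch_run reach)
  then show "w \<in> ppba_lang (ppba_of_rpba A)"
    using is_run_switch_run[OF run] reach(1)
    unfolding ppba_lang_def ppba_accepting_def by auto
qed

lemma copiesD:
  assumes "t' \<in> copies A t"
  shows "source t' div 2 = source t" and "label t' = label t" and "target t' div 2 = target t"
    and "even (source t') \<Longrightarrow> weight t' = weight t"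
    and "odd (source t') \<Longrightarrow> odd (target t') \<and> weight t' = replicate (dim A) 0"
    and "even (source t') \<Longrightarrow> odd (target t') \<Longrightarrow> target t \<in> final A"
  using assms by (auto simp: copies_def copy_trans_def split: if_splits)

lemma run_ppba_of_rpba_projects:
  assumes "is_run (ppba_of_rpba A) w r'"
  obtains r where "is_run A w r" and "\<And>k. r' k \<in> copies A (r k)"
proof -
  have "\<forall>k. \<exists>t. t \<in> trans A \<and> r' k \<in> copies A t"
    using assms unfolding is_run_def ppba_of_rpba_simps by blast
  then obtain r where r: "\<And>k. r k \<in> trans A" "\<And>k. r' k \<in> copies A (r k)"
    by metis
  have "is_run A w r"
    using assms r(1) unfolding is_run_def by (simp add: copiesD(1-3)[OF r(2), symmetric])
  then show thesis using r(2) by (rule that)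
qed

lemma run_ppba_of_rpba_stays_odd:
  assumes "is_run (ppba_of_rpba A) w r'" and "odd (source (r' s))" and "s \<le> k"
  shows "odd (source (r' k))"
  using assms(3)
proof (induction k rule: dec_induct)
  case (step k)
  obtain t where "r' k \<in> copies A t"
    using assms(1) unfolding is_run_def ppba_of_rpba_simps by blast
  with step.IH show ?case
    using assms(1) copiesD(5) by (metis is_run_def)
qed (rule assms(2))

lemma run_ppba_of_rpba_first_switch:
  assumes run': "is_run (ppba_of_rpba A) w r'" and proj: "\<And>k. r' k \<in> copies A (r k)"
    and "odd (source (r' i))"
  obtains n where "Suc n \<le> i" and "rstate r (Suc n) \<in> final A"
    and "rho (dim A) r (Suc n) = rho (dim A) r' i"
proof -
  define s where "s = (LEAST k. odd (source (r' k)))"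
  have odd_s: "odd (source (r' s))" and "s \<le> i"
    using assms(3) unfolding s_def by (rule LeastI, rule Least_le)
  have even_before: "even (source (r' k))" if "k < s" for k
    using that not_less_Least unfolding s_def by blast
  have "s \<noteq> 0"
    using odd_s run' by (cases s) (simp_all add: is_run_def)
  then obtain n where s: "s = Suc n"
    using not0_implies_Suc by blast
  have "target (r' n) = source (r' s)"
    using run' s by (simp add: is_run_def)
  then have "rstate r (Suc n) \<in> final A"
    using copiesD(6)[OF proj] even_before[of n] odd_s s by simp
  moreover have "rho (dim A) r s = rho (dim A) r' s"
    using even_before copiesD(4)[OF proj] by (intro rho_cong) simp
  moreover have "rho (dim A) r' s = rho (dim A) r' i"
    using \<open>s \<le> i\<close> run_ppba_of_rpba_stays_odd[OF run' odd_s] copiesD(5)[OF proj]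
    by (intro rho_eq_if_zero_weights[symmetric]) auto
  ultimately show thesis
    using that \<open>s \<le> i\<close> s by simp
qed

lemma ppba_lang_subset_rpba_lang: "ppba_lang (ppba_of_rpba A) \<subseteq> rpba_lang A"
proof
  fix w assume "w \<in> ppba_lang (ppba_of_rpba A)"
  then obtain r' where run': "is_run (ppba_of_rpba A) w r'"
    and acc: "\<exists>\<^sub>\<infinity>i. i \<ge> 1 \<and> rstate r' i \<in> (\<lambda>q. 2 * q + 1) ` final A
      \<and> rho (dim A) r' i \<in> constr A"
    unfolding ppba_lang_def ppba_accepting_def by auto
  obtain r where run: "is_run A w r" and proj: "\<And>k. r' k \<in> copies A (r k)"
    using run_ppba_of_rpba_projects[OF run'] by blast
  have rstate_proj: "rstate r j = rstate r' j div 2" for j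
    using copiesD(3)[OF proj] by (simp add: rstate_def)
  obtain i where "i \<ge> 1" "rstate r' i \<in> (\<lambda>q. 2 * q + 1) ` final A"
    and i_constr: "rho (dim A) r' i \<in> constr A"
    using frequently_ex[OF acc] by blast
  then have "odd (source (r' i))"
    using rstate_run[OF run'] by auto
  with i_constr obtain n where "rstate r (Suc n) \<in> final A" "rho (dim A) r (Suc n) \<in> constr A"
    using run_ppba_of_rpba_first_switch[OF run' proj] by metis
  then have "\<exists>i\<ge>1. rstate r i \<in> final A \<and> rho (dim A) r i \<in> constr A"
    by (intro exI[of _ "Suc n"]) simp
  moreover have "\<exists>\<^sub>\<infinity>j. j \<ge> 1 \<and> rstate r j \<in> final A"
    using acc by (rule frequently_elim1) (auto simp: rstate_proj)
  ultimately have "rpba_accepting A r"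
    unfolding rpba_accepting_def ..
  with run show "w \<in> rpba_lang A"
    unfolding rpba_lang_def by blast
qed

theorem corollary1:
  fixes \<Sigma> :: "'a set" and L :: "(nat \<Rightarrow> 'a) set"
  assumes "finite \<Sigma>"
    and "rpba_recognizable \<Sigma> L"
  shows "ppba_recognizable \<Sigma> L"
proof -
  obtain A where "wf_pa A" and "\<forall>(p, a, v, q) \<in> trans A. a \<in> \<Sigma>" and "L = rpba_lang A"
    using assms(2) unfolding rpba_recognizable_def by blast
  moreover have "rpba_lang A = ppba_lang (ppba_of_rpba A)"
    using rpba_lang_subset_ppba_lang ppba_lang_subset_rpba_lang by blast
  ultimately show ?thesis
    unfolding ppba_recognizable_def using wf_pa_ppba_of_rpba labels_ppba_of_rpba by metis
qed

end
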